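(* Let $R$ be a finite local Frobenius ring which is not a field, of odd characteristic, in which $3$ is a unit, and fix a primitive additive character $\psi$ of $R$. Then for every non-primitive multiplicative character $\tau$ of $R$, $$\sum_{a\in R^\times}K_\tau(a)^3=0.$$
   Context: All rings are finite and commutative with identity; $R^\times$ is the unit group; $M$ is the maximal ideal of the local ring $R$. An additive character $(R,+)\to\mathbb{C}^*$ is primitive if the only ideal on which it is identically $1$ is $(0)$; $R$ is Frobenius if such a character exists. A multiplicative character is a homomorphism $R^\times\to\mathbb{C}^*$; its conductor is $R$ if it is trivial, and otherwise the largest ideal $I\subseteq M$ such that it is identically $1$ on $1+I$; it is primitive if its conductor is $(0)$. $K_\tau(a)=\sum_{u\in R^\times}\tau(u)\psi(u+au^{-1})$. Odd characteristic means $R/M$ has odd characteristic. *)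

theory Defs
  imports Complex_Main
begin

definition ring_units :: "'a::comm_ring_1 set" where
  "ring_units = {u. \<exists>v. u * v = 1}"

definition ring_inv :: "'a::comm_ring_1 \<Rightarrow> 'a" where
  "ring_inv u = (THE v. u * v = 1)"

definition is_ideal :: "'a::comm_ring_1 set \<Rightarrow> bool" where
  "is_ideal I \<longleftrightarrow> 0 \<in> I \<and> (\<forall>x\<in>I. \<forall>y\<in>I. x + y \<in> I) \<and> (\<forall>r. \<forall>x\<in>I. r * x \<in> I)"

definition is_maximal_ideal :: "'a::comm_ring_1 set \<Rightarrow> bool" where
  "is_maximal_ideal M \<longleftrightarrow> is_ideal M \<and> M \<noteq> UNIV \<and>
     (\<forall>J. is_ideal J \<and> M \<subseteq> J \<longrightarrow> J = M \<or> J = UNIV)"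

definition local_ring :: "'a::comm_ring_1 itself \<Rightarrow> bool" where
  "local_ring _ \<longleftrightarrow> (\<exists>!M::'a set. is_maximal_ideal M)"

definition max_ideal :: "'a::comm_ring_1 set" where
  "max_ideal = (THE M. is_maximal_ideal M)"

definition is_field_ring :: "'a::comm_ring_1 itself \<Rightarrow> bool" where
  "is_field_ring _ \<longleftrightarrow> (\<forall>x::'a. x \<noteq> 0 \<longrightarrow> x \<in> ring_units)"

text \<open>Characteristic of the residue field R/M: least positive n with n*1 in M.\<close>
definition residue_char :: "'a::comm_ring_1 itself \<Rightarrow> nat" where
  "residue_char _ = (LEAST n. n > 0 \<and> (of_nat n :: 'a) \<in> max_ideal)"

definition additive_character :: "('a::comm_ring_1 \<Rightarrow> complex) \<Rightarrow> bool" where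
  "additive_character \<psi> \<longleftrightarrow> (\<forall>x. \<psi> x \<noteq> 0) \<and> (\<forall>x y. \<psi> (x + y) = \<psi> x * \<psi> y)"

definition primitive_additive_character :: "('a::comm_ring_1 \<Rightarrow> complex) \<Rightarrow> bool" where
  "primitive_additive_character \<psi> \<longleftrightarrow> additive_character \<psi> \<and>
     (\<forall>I. is_ideal I \<and> (\<forall>x\<in>I. \<psi> x = 1) \<longrightarrow> I = {0})"

definition frobenius_ring :: "'a::comm_ring_1 itself \<Rightarrow> bool" where
  "frobenius_ring _ \<longleftrightarrow> (\<exists>\<psi>::'a \<Rightarrow> complex. primitive_additive_character \<psi>)"

text \<open>A multiplicative character is a homomorphism R^x -> C^*; only its values on units matter.\<close>
definition mult_character :: "('a::comm_ring_1 \<Rightarrow> complex) \<Rightarrow> bool" where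
  "mult_character \<tau> \<longleftrightarrow> (\<forall>u\<in>ring_units. \<tau> u \<noteq> 0) \<and>
     (\<forall>u\<in>ring_units. \<forall>v\<in>ring_units. \<tau> (u * v) = \<tau> u * \<tau> v)"

definition conductor :: "('a::comm_ring_1 \<Rightarrow> complex) \<Rightarrow> 'a set" where
  "conductor \<tau> = (if (\<forall>u\<in>ring_units. \<tau> u = 1) then UNIV
     else (THE I. is_ideal I \<and> I \<subseteq> max_ideal \<and> (\<forall>x\<in>I. \<tau> (1 + x) = 1) \<and>
            (\<forall>J. is_ideal J \<and> J \<subseteq> max_ideal \<and> (\<forall>x\<in>J. \<tau> (1 + x) = 1) \<longrightarrow> J \<subseteq> I)))"

definition primitive_mult_character :: "('a::comm_ring_1 \<Rightarrow> complex) \<Rightarrow> bool" where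
  "primitive_mult_character \<tau> \<longleftrightarrow> mult_character \<tau> \<and> conductor \<tau> = {0}"

definition kloosterman :: "('a::comm_ring_1 \<Rightarrow> complex) \<Rightarrow> ('a \<Rightarrow> complex) \<Rightarrow> 'a \<Rightarrow> complex" where
  "kloosterman \<tau> \<psi> a = (\<Sum>u\<in>ring_units. \<tau> u * \<psi> (u + a * ring_inv u))"

end

theory Submission
  imports Defs
begin

text \<open>Since \<open>\<tau>\<close> is not primitive and \<open>R\<close> is not a field, there is a nonzero \<open>s\<close> with
  \<open>M s = 0\<close> (so \<open>s\<^sup>2 = 0\<close>) such that \<open>\<tau>\<close> is trivial on \<open>1 + s R\<close>. Expanding the cube,
  \<open>\<Sum>\<^sub>a K\<^sub>\<tau>(a)\<^sup>3\<close> is a sum over quadruples of units \<open>(a, u, v, w)\<close>, and it is invariant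
  under multiplying the four entries by elements \<open>1 + t s, 1 + x s, 1 + y s, 1 + z s\<close>. Averaging
  over \<open>(t, x, y, z) \<in> R\<^sup>4\<close> turns each summand into a product of four sums
  \<open>\<Sum>\<^sub>r \<psi>(s r c)\<close>, with \<open>c\<close> ranging over \<open>u - a/u, v - a/v, w - a/w\<close> and
  \<open>a(1/u + 1/v + 1/w)\<close>. Such a sum vanishes as soon as \<open>c\<close> is a unit, because \<open>\<psi>\<close> is
  primitive; and one of the four is always a unit: otherwise \<open>u\<^sup>2 \<equiv> v\<^sup>2 \<equiv> w\<^sup>2 \<equiv> a\<close> modulo
  \<open>M\<close>, so \<open>u/v, u/w \<equiv> \<plusminus>1\<close>, and \<open>0 \<equiv> u (1/u + 1/v + 1/w) \<equiv> 1 \<plusminus> 1 \<plusminus> 1\<close>, which is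
  a unit since \<open>3\<close> is.\<close>

lemma ring_unitsI: "(u::'a::comm_ring_1) * v = 1 \<Longrightarrow> u \<in> ring_units"
  by (auto simp: ring_units_def)

lemma one_in_ring_units: "(1::'a::comm_ring_1) \<in> ring_units"
  by (rule ring_unitsI[of 1 1]) simp

lemma neg_one_in_ring_units: "(-1::'a::comm_ring_1) \<in> ring_units"
  by (rule ring_unitsI[of _ "-1"]) simp

lemma ring_inv_unique: "(u::'a::comm_ring_1) * v = 1 \<Longrightarrow> ring_inv u = v"
  unfolding ring_inv_def
proof (rule the_equality)
  fix w assume "u * v = 1" "u * w = 1"
  then have "w = v * (u * w)" by (metis mult.left_commute mult_1_right)
  then show "w = v" using \<open>u * w = 1\<close> by simp
qed

lemma ring_inv_right: "(u::'a::comm_ring_1) \<in> ring_units \<Longrightarrow> u * ring_inv u = 1"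
  unfolding ring_units_def using ring_inv_unique by fastforce

lemma ring_inv_left: "(u::'a::comm_ring_1) \<in> ring_units \<Longrightarrow> ring_inv u * u = 1"
  using ring_inv_right by (simp add: mult.commute)

lemma ring_units_mult:
  assumes "(u::'a::comm_ring_1) \<in> ring_units" "v \<in> ring_units"
  shows "u * v \<in> ring_units"
proof -
  obtain a b where "u * a = 1" "v * b = 1" using assms by (auto simp: ring_units_def)
  then have "(u * v) * (a * b) = 1" by (metis mult.left_commute mult.assoc mult_1_right)
  then show ?thesis by (rule ring_unitsI)
qed

lemma mult_not_ring_units:
  assumes "(x::'a::comm_ring_1) \<notin> ring_units"
  shows "r * x \<notin> ring_units"
proof
  assume "r * x \<in> ring_units"
  then obtain a where "(r * x) * a = 1" by (auto simp: ring_units_def)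
  then have "x * (r * a) = 1" by (simp add: ac_simps)
  with assms show False by (blast intro: ring_unitsI)
qed

lemma ring_units_mult_cancel:
  assumes "(e::'a::comm_ring_1) \<in> ring_units" "e * x = 0"
  shows "x = 0"
proof -
  have "x = (ring_inv e * e) * x" using ring_inv_left[OF assms(1)] by simp
  also have "\<dots> = 0" using assms(2) by (simp add: mult.assoc)
  finally show ?thesis .
qed

lemma is_ideal_principal: "is_ideal (range (\<lambda>r. r * (x::'a::comm_ring_1)))"
  unfolding is_ideal_def
proof (intro conjI ballI allI)
  show "0 \<in> range (\<lambda>r. r * x)" by (metis mult_zero_left rangeI)
  show "a + b \<in> range (\<lambda>r. r * x)" if "a \<in> range (\<lambda>r. r * x)" "b \<in> range (\<lambda>r. r * x)" for a b
    using that by (auto simp flip: distrib_right)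
  show "r * a \<in> range (\<lambda>r. r * x)" if "a \<in> range (\<lambda>r. r * x)" for r a
    using that by (auto simp flip: mult.assoc)
qed

section \<open>Finite local rings\<close>

lemma finite_ideal_in_maximal_ideal:
  assumes "is_ideal (I::'a::{comm_ring_1,finite} set)" "I \<noteq> UNIV"
  shows "\<exists>M. is_maximal_ideal M \<and> I \<subseteq> M"
proof -
  let ?P = "\<lambda>J::'a set. is_ideal J \<and> I \<subseteq> J \<and> J \<noteq> UNIV"
  let ?codim = "\<lambda>J::'a set. card (UNIV::'a set) - card J"
  obtain J where J: "?P J" and largest: "\<And>K. ?P K \<Longrightarrow> ?codim J \<le> ?codim K"
    using ex_has_least_nat[of ?P I ?codim] assms by blast
  have "is_maximal_ideal J"
    unfolding is_maximal_ideal_def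
  proof (intro conjI allI impI)
    fix K assume K: "is_ideal K \<and> J \<subseteq> K"
    show "K = J \<or> K = UNIV"
    proof (cases "K = UNIV")
      case False
      with K J have "?codim J \<le> ?codim K" by (intro largest) blast
      moreover have "card K \<le> card (UNIV::'a set)" "card J \<le> card K"
        using K by (simp_all add: card_mono)
      ultimately have "card K = card J" by linarith
      with K have "J = K" by (intro card_subset_eq) simp_all
      then show ?thesis by simp
    qed simp
  qed (use J in simp_all)
  with J show ?thesis by blast
qed

lemma proper_ideal_disjoint_ring_units:
  assumes "is_ideal M" "M \<noteq> UNIV" "(u::'a::comm_ring_1) \<in> M"
  shows "u \<notin> ring_units"
proof
  assume "u \<in> ring_units"
  have "r = (r * ring_inv u) * u" for r using ring_inv_left[OF \<open>u \<in> ring_units\<close>] by (simp add: mult.assoc)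
  moreover have "(r * ring_inv u) * u \<in> M" for r using assms(1,3) unfolding is_ideal_def by blast
  ultimately have "r \<in> M" for r by metis
  with assms(2) show False by blast
qed

lemma local_ring_max_ideal:
  assumes "local_ring TYPE('a::comm_ring_1)"
  shows "is_maximal_ideal (max_ideal::'a set)"
  using assms theI'[of "is_maximal_ideal::'a set \<Rightarrow> bool"] by (simp add: local_ring_def max_ideal_def)

lemma local_ring_max_ideal_eq:
  assumes local: "local_ring TYPE('a::{comm_ring_1,finite})"
  shows "max_ideal = {x::'a. x \<notin> ring_units}"
proof
  have "is_ideal (max_ideal::'a set)" "(max_ideal::'a set) \<noteq> UNIV"
    using local_ring_max_ideal[OF local] by (simp_all add: is_maximal_ideal_def)
  then show "max_ideal \<subseteq> {x::'a. x \<notin> ring_units}"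
    using proper_ideal_disjoint_ring_units by blast
  show "{x::'a. x \<notin> ring_units} \<subseteq> max_ideal"
  proof
    fix x :: 'a assume "x \<in> {x. x \<notin> ring_units}"
    then have "1 \<notin> range (\<lambda>r. r * x)" using ring_unitsI[of x] by (force simp: mult.commute)
    then have "range (\<lambda>r. r * x) \<noteq> UNIV" by blast
    then obtain M where M: "is_maximal_ideal M" "range (\<lambda>r. r * x) \<subseteq> M"
      using finite_ideal_in_maximal_ideal is_ideal_principal by blast
    have "M = max_ideal"
      using M(1) local_ring_max_ideal[OF local] local unfolding local_ring_def by blast
    moreover have "x \<in> range (\<lambda>r. r * x)" by (metis mult_1 rangeI)
    ultimately show "x \<in> max_ideal" using M(2) by blast
  qed
qed

lemma local_ring_nonunits_add:
  assumes "local_ring TYPE('a::{comm_ring_1,finite})" "(x::'a) \<notin> ring_units" "y \<notin> ring_units"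
  shows "x + y \<notin> ring_units"
proof -
  have "is_ideal {x::'a. x \<notin> ring_units}"
    using local_ring_max_ideal[OF assms(1)]
    unfolding local_ring_max_ideal_eq[OF assms(1)] is_maximal_ideal_def by simp
  with assms(2,3) show ?thesis unfolding is_ideal_def by simp
qed

lemma local_ring_nonunits_diff:
  assumes "local_ring TYPE('a::{comm_ring_1,finite})" "(x::'a) \<notin> ring_units" "y \<notin> ring_units"
  shows "x - y \<notin> ring_units"
  using local_ring_nonunits_add[OF assms(1,2) mult_not_ring_units[OF assms(3), of "-1"]] by simp

lemma local_ring_one_plus_in_units:
  assumes "local_ring TYPE('a::{comm_ring_1,finite})" "(y::'a) \<notin> ring_units"
  shows "1 + y \<in> ring_units"
  using local_ring_nonunits_diff[OF assms(1) _ assms(2), of "1 + y"] one_in_ring_units by auto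

lemma local_ring_ratio_near_sign:
  assumes local: "local_ring TYPE('a::{comm_ring_1,finite})"
    and u: "(u::'a) \<in> ring_units" and z: "z \<in> ring_units" and sq: "u * u - z * z \<notin> ring_units"
  obtains \<epsilon> where "\<epsilon> = 1 \<or> \<epsilon> = -1" "u * ring_inv z - \<epsilon> \<notin> ring_units"
proof -
  let ?q = "u * ring_inv z"
  have "(?q - 1) * (?q - (-1)) = (ring_inv z * ring_inv z) * (u * u - z * z)"
    using ring_inv_right[OF z] by (simp add: algebra_simps)
  then have "(?q - 1) * (?q - (-1)) \<notin> ring_units"
    using mult_not_ring_units[OF sq] by simp
  then have "?q - 1 \<notin> ring_units \<or> ?q - (-1) \<notin> ring_units"
    using ring_units_mult by blast
  with that show ?thesis by blast
qed

lemma local_ring_twist_coefficient_unit: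
  assumes local: "local_ring TYPE('a::{comm_ring_1,finite})" and three: "(3::'a) \<in> ring_units"
    and a: "(a::'a) \<in> ring_units" and u: "u \<in> ring_units" and v: "v \<in> ring_units" and w: "w \<in> ring_units"
  shows "u - a * ring_inv u \<in> ring_units \<or> v - a * ring_inv v \<in> ring_units \<or>
    w - a * ring_inv w \<in> ring_units \<or> a * (ring_inv u + ring_inv v + ring_inv w) \<in> ring_units"
proof (rule ccontr)
  assume "\<not> ?thesis"
  then have cu: "u - a * ring_inv u \<notin> ring_units" and cv: "v - a * ring_inv v \<notin> ring_units"
    and cw: "w - a * ring_inv w \<notin> ring_units" and ca: "a * (ring_inv u + ring_inv v + ring_inv w) \<notin> ring_units"
    by auto
  have square_near_a: "z * z - a \<notin> ring_units" if "z \<in> ring_units" "z - a * ring_inv z \<notin> ring_units" for z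
  proof -
    have "z * (z - a * ring_inv z) = z * z - a"
      using ring_inv_right[OF that(1)] by (simp add: algebra_simps)
    then show ?thesis using mult_not_ring_units[OF that(2)] by metis
  qed
  have "u * u - z * z \<notin> ring_units" if "z \<in> ring_units" "z - a * ring_inv z \<notin> ring_units" for z
    using local_ring_nonunits_diff[OF local square_near_a[OF u cu] square_near_a[OF that]] by simp
  then obtain \<epsilon>1 \<epsilon>2 where \<epsilon>1: "\<epsilon>1 = 1 \<or> \<epsilon>1 = -1" "u * ring_inv v - \<epsilon>1 \<notin> ring_units"
    and \<epsilon>2: "\<epsilon>2 = 1 \<or> \<epsilon>2 = -1" "u * ring_inv w - \<epsilon>2 \<notin> ring_units"
    using local_ring_ratio_near_sign[OF local u v] local_ring_ratio_near_sign[OF local u w] v w cv cw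
    by metis
  have "(u * ring_inv a) * (a * (ring_inv u + ring_inv v + ring_inv w))
      = (a * ring_inv a) * (u * ring_inv u + u * ring_inv v + u * ring_inv w)"
    by (simp add: algebra_simps)
  then have "1 + u * ring_inv v + u * ring_inv w \<notin> ring_units"
    using mult_not_ring_units[OF ca, of "u * ring_inv a"] ring_inv_right[OF a] ring_inv_right[OF u] by simp
  then have "(1 + u * ring_inv v + u * ring_inv w) - (u * ring_inv v - \<epsilon>1) - (u * ring_inv w - \<epsilon>2) \<notin> ring_units"
    using local_ring_nonunits_diff[OF local local_ring_nonunits_diff[OF local _ \<epsilon>1(2)] \<epsilon>2(2)] by blast
  then have "1 + \<epsilon>1 + \<epsilon>2 \<notin> ring_units" by (simp add: algebra_simps)
  moreover have "1 + \<epsilon>1 + \<epsilon>2 \<in> ring_units"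
    using \<epsilon>1(1) \<epsilon>2(1) three one_in_ring_units neg_one_in_ring_units by (auto simp: numeral_3_eq_3)
  ultimately show False by contradiction
qed

section \<open>The conductor of a multiplicative character\<close>

lemma mult_character_mult:
  "mult_character \<tau> \<Longrightarrow> u \<in> ring_units \<Longrightarrow> v \<in> ring_units \<Longrightarrow> \<tau> (u * v) = \<tau> u * \<tau> v"
  by (simp add: mult_character_def)

lemma mult_character_one: "mult_character \<tau> \<Longrightarrow> \<tau> (1::'a::comm_ring_1) = 1"
  using mult_character_mult[OF _ one_in_ring_units one_in_ring_units, of \<tau>] one_in_ring_units[where 'a='a]
  by (simp add: mult_character_def)

definition char_trivial_ideal :: "('a::comm_ring_1 \<Rightarrow> complex) \<Rightarrow> 'a set" where
  "char_trivial_ideal \<tau> = {y. y \<notin> ring_units \<and> (\<forall>r. \<tau> (1 + r * y) = 1)}"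

lemma is_ideal_char_trivial_ideal:
  fixes \<tau> :: "'a::{comm_ring_1,finite} \<Rightarrow> complex"
  assumes local: "local_ring TYPE('a)" and \<tau>: "mult_character \<tau>" and zero: "(0::'a) \<notin> ring_units"
  shows "is_ideal (char_trivial_ideal \<tau>)"
  unfolding is_ideal_def
proof (intro conjI ballI allI)
  show "0 \<in> char_trivial_ideal \<tau>"
    using zero mult_character_one[OF \<tau>] by (simp add: char_trivial_ideal_def)
  show "r * y \<in> char_trivial_ideal \<tau>" if "y \<in> char_trivial_ideal \<tau>" for r y
    using that mult_not_ring_units[of y r] by (simp add: char_trivial_ideal_def mult.assoc[symmetric])
  show "y + z \<in> char_trivial_ideal \<tau>" if y: "y \<in> char_trivial_ideal \<tau>" and z: "z \<in> char_trivial_ideal \<tau>" for y z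
  proof -
    have yn: "y \<notin> ring_units" and zn: "z \<notin> ring_units" using y z by (simp_all add: char_trivial_ideal_def)
    have "\<tau> (1 + r * (y + z)) = 1" for r
    proof -
      define e where "e = 1 + r * y"
      have e: "e \<in> ring_units" unfolding e_def by (rule local_ring_one_plus_in_units[OF local mult_not_ring_units[OF yn]])
      define f where "f = 1 + (ring_inv e * r) * z"
      have f: "f \<in> ring_units" unfolding f_def by (rule local_ring_one_plus_in_units[OF local mult_not_ring_units[OF zn]])
      have "e * f = e + (e * ring_inv e) * r * z" unfolding f_def by (simp add: algebra_simps)
      also have "\<dots> = 1 + r * (y + z)" using ring_inv_right[OF e] unfolding e_def by (simp add: algebra_simps)
      finally show ?thesis
        using mult_character_mult[OF \<tau> e f] y z by (simp add: char_trivial_ideal_def e_def f_def)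
    qed
    with local_ring_nonunits_add[OF local yn zn] show ?thesis by (simp add: char_trivial_ideal_def)
  qed
qed

lemma conductor_eq_char_trivial_ideal:
  fixes \<tau> :: "'a::{comm_ring_1,finite} \<Rightarrow> complex"
  assumes local: "local_ring TYPE('a)" and \<tau>: "mult_character \<tau>" and zero: "(0::'a) \<notin> ring_units"
    and nontrivial: "\<not> (\<forall>u\<in>ring_units. \<tau> u = 1)"
  shows "conductor \<tau> = char_trivial_ideal \<tau>"
proof -
  let ?P = "\<lambda>I::'a set. is_ideal I \<and> I \<subseteq> max_ideal \<and> (\<forall>x\<in>I. \<tau> (1 + x) = 1)"
  have P: "?P (char_trivial_ideal \<tau>)"
    using is_ideal_char_trivial_ideal[OF local \<tau> zero] mult_character_one[OF \<tau>]
    by (auto simp: char_trivial_ideal_def local_ring_max_ideal_eq[OF local] dest: spec[of _ 1])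
  have largest: "J \<subseteq> char_trivial_ideal \<tau>" if "?P J" for J
  proof
    fix x assume "x \<in> J"
    with that have "r * x \<in> J" for r unfolding is_ideal_def by blast
    with that \<open>x \<in> J\<close> show "x \<in> char_trivial_ideal \<tau>"
      by (auto simp: char_trivial_ideal_def local_ring_max_ideal_eq[OF local])
  qed
  have "conductor \<tau> = (THE I. ?P I \<and> (\<forall>J. ?P J \<longrightarrow> J \<subseteq> I))"
    unfolding conductor_def if_not_P[OF nontrivial] by (simp only: conj_assoc)
  also have "\<dots> = char_trivial_ideal \<tau>"
  proof (rule the_equality)
    show "?P (char_trivial_ideal \<tau>) \<and> (\<forall>J. ?P J \<longrightarrow> J \<subseteq> char_trivial_ideal \<tau>)"
      using P largest by blast
    show "I = char_trivial_ideal \<tau>" if "?P I \<and> (\<forall>J. ?P J \<longrightarrow> J \<subseteq> I)" for I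
      using that P largest by (intro subset_antisym) simp_all
  qed
  finally show ?thesis .
qed

lemma char_trivial_ideal_nonzero:
  fixes \<tau> :: "'a::{comm_ring_1,finite} \<Rightarrow> complex"
  assumes local: "local_ring TYPE('a)" and not_field: "\<not> is_field_ring TYPE('a)"
    and \<tau>: "mult_character \<tau>" and not_primitive: "\<not> primitive_mult_character \<tau>"
  shows "is_ideal (char_trivial_ideal \<tau>)" "char_trivial_ideal \<tau> \<noteq> {0}"
proof -
  obtain x :: 'a where x: "x \<noteq> 0" "x \<notin> ring_units"
    using not_field unfolding is_field_ring_def by blast
  have zero: "(0::'a) \<notin> ring_units"
    using x ring_units_mult_cancel[of 0 x] by auto
  show "is_ideal (char_trivial_ideal \<tau>)" by (rule is_ideal_char_trivial_ideal[OF local \<tau> zero])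
  show "char_trivial_ideal \<tau> \<noteq> {0}"
  proof (cases "\<forall>u\<in>ring_units. \<tau> u = 1")
    case True
    then have "x \<in> char_trivial_ideal \<tau>"
      using x local_ring_one_plus_in_units[OF local mult_not_ring_units[OF x(2)]]
      by (simp add: char_trivial_ideal_def)
    with x show ?thesis by blast
  next
    case False
    then show ?thesis
      using conductor_eq_char_trivial_ideal[OF local \<tau> zero] \<tau> not_primitive
      by (simp add: primitive_mult_character_def)
  qed
qed

text \<open>A nonzero element generating a minimal principal ideal is killed by the maximal ideal.\<close>
lemma local_ring_ideal_socle_element:
  assumes local: "local_ring TYPE('a::{comm_ring_1,finite})"
    and I: "is_ideal (I::'a set)" "I \<noteq> {0}"
  obtains s where "s \<in> I" "s \<noteq> 0" "\<And>n. n \<notin> ring_units \<Longrightarrow> n * s = 0"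
proof -
  let ?size = "\<lambda>y::'a. card (range (\<lambda>r. r * y))"
  obtain x where "x \<in> I" "x \<noteq> 0" using I unfolding is_ideal_def by blast
  then obtain s where s: "s \<in> I" "s \<noteq> 0" and smallest: "\<And>y. y \<in> I \<Longrightarrow> y \<noteq> 0 \<Longrightarrow> ?size s \<le> ?size y"
    using ex_has_least_nat[of "\<lambda>y. y \<in> I \<and> y \<noteq> 0" x ?size] by blast
  have "n * s = 0" if n: "n \<notin> ring_units" for n
  proof (rule ccontr)
    assume ns: "n * s \<noteq> 0"
    have sub: "range (\<lambda>r. r * (n * s)) \<subseteq> range (\<lambda>r. r * s)"
      by (auto simp: mult.assoc[symmetric])
    moreover have "?size s \<le> ?size (n * s)"
      using smallest ns s(1) I(1) unfolding is_ideal_def by blast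
    moreover have "?size (n * s) \<le> ?size s" using sub by (simp add: card_mono)
    ultimately have "range (\<lambda>r. r * (n * s)) = range (\<lambda>r. r * s)"
      by (intro card_subset_eq) simp_all
    moreover have "s \<in> range (\<lambda>r. r * s)" by (metis mult_1 rangeI)
    ultimately obtain r where "s = r * (n * s)" by blast
    then have "(1 + - (r * n)) * s = 0" by (simp add: algebra_simps)
    moreover have "1 + - (r * n) \<in> ring_units"
      using local_ring_one_plus_in_units[OF local mult_not_ring_units[OF mult_not_ring_units[OF n], of "-1"]]
      by simp
    ultimately show False using ring_units_mult_cancel s(2) by blast
  qed
  with s that show ?thesis by blast
qed

lemma additive_character_add: "additive_character \<psi> \<Longrightarrow> \<psi> (x + y) = \<psi> x * \<psi> y"
  by (simp add: additive_character_def)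

lemma sum_additive_character_multiples:
  fixes \<psi> :: "'a::{comm_ring_1,finite} \<Rightarrow> complex"
  assumes \<psi>: "additive_character \<psi>" and nontrivial: "\<psi> (s * r0) \<noteq> 1"
  shows "(\<Sum>r\<in>UNIV. \<psi> (s * r)) = 0"
proof -
  let ?S = "\<Sum>r\<in>UNIV. \<psi> (s * r)"
  have "?S = (\<Sum>r\<in>UNIV. \<psi> (s * (r + r0)))"
    by (rule sum.reindex_bij_witness[where i="\<lambda>r. r + r0" and j="\<lambda>r. r - r0"]) simp_all
  also have "\<dots> = ?S * \<psi> (s * r0)"
    by (simp add: distrib_left additive_character_add[OF \<psi>] sum_distrib_right)
  finally have "?S * (1 - \<psi> (s * r0)) = 0" by (simp add: algebra_simps)
  with nontrivial show ?thesis by simp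
qed

lemma sum_product4:
  fixes f g h k :: "'a \<Rightarrow> 'b::comm_semiring_0"
  shows "(\<Sum>p\<in>A \<times> B \<times> C \<times> D. case p of (t, x, y, z) \<Rightarrow> f t * g x * h y * k z)
    = sum f A * sum g B * sum h C * sum k D"
proof -
  have "sum f A * (sum g B * (sum h C * sum k D))
      = (\<Sum>t\<in>A. \<Sum>x\<in>B. \<Sum>y\<in>C. \<Sum>z\<in>D. f t * (g x * (h y * k z)))"
    by (simp only: sum_product, simp only: sum_distrib_left)
  then show ?thesis by (simp add: sum.cartesian_product' mult.assoc)
qed

lemma power3_sum:
  fixes g :: "'a \<Rightarrow> 'b::comm_semiring_1"
  shows "(sum g A) ^ 3 = (\<Sum>u\<in>A. \<Sum>v\<in>A. \<Sum>w\<in>A. g u * g v * g w)"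
proof -
  have "sum g A * (sum g A * sum g A) = (\<Sum>u\<in>A. \<Sum>v\<in>A. \<Sum>w\<in>A. g u * (g v * g w))"
    by (simp only: sum_product, simp only: sum_distrib_left)
  then show ?thesis by (simp add: power3_eq_cube mult.assoc)
qed

lemma sum_zero_by_averaging:
  fixes f :: "'q \<Rightarrow> 'b::{idom,ring_char_0}"
  assumes "finite P" "P \<noteq> {}"
    and invariant: "\<And>p. p \<in> P \<Longrightarrow> (\<Sum>q\<in>A. f (act p q)) = (\<Sum>q\<in>A. f q)"
    and orbit_sums: "\<And>q. q \<in> A \<Longrightarrow> (\<Sum>p\<in>P. f (act p q)) = 0"
  shows "(\<Sum>q\<in>A. f q) = 0"
proof -
  have "of_nat (card P) * (\<Sum>q\<in>A. f q) = (\<Sum>p\<in>P. \<Sum>q\<in>A. f (act p q))"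
    using invariant by simp
  also have "\<dots> = (\<Sum>q\<in>A. \<Sum>p\<in>P. f (act p q))" by (rule sum.swap)
  also have "\<dots> = 0" using orbit_sums by simp
  finally show ?thesis using assms(1,2) by simp
qed

section \<open>Twisting by \<open>1 + s R\<close> for a socle element \<open>s\<close>\<close>

locale kloosterman_socle =
  fixes \<psi> \<tau> :: "'a::{comm_ring_1,finite} \<Rightarrow> complex" and s :: 'a
  assumes local: "local_ring TYPE('a)"
    and \<psi>: "primitive_additive_character \<psi>"
    and \<tau>: "mult_character \<tau>"
    and s_nonzero: "s \<noteq> 0"
    and s_trivial: "s \<in> char_trivial_ideal \<tau>"
    and s_socle: "\<And>n. n \<notin> ring_units \<Longrightarrow> n * s = 0"
begin

lemma psi_additive: "additive_character \<psi>"
  using \<psi> by (simp add: primitive_additive_character_def)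

lemma s_nonunit: "s \<notin> ring_units"
  using s_trivial by (simp add: char_trivial_ideal_def)

definition twist :: "'a \<Rightarrow> 'a" where
  "twist r = 1 + r * s"

lemma twist_in_units: "twist r \<in> ring_units"
  unfolding twist_def by (rule local_ring_one_plus_in_units[OF local mult_not_ring_units[OF s_nonunit]])

lemma twist_mult: "twist r * twist r' = twist (r + r')"
  using s_socle[OF s_nonunit] by (simp add: twist_def algebra_simps flip: mult.assoc)

lemma twist_zero: "twist 0 = 1"
  by (simp add: twist_def)

lemma tau_twist: "\<tau> (twist r) = 1"
  using s_trivial by (simp add: char_trivial_ideal_def twist_def)

lemma ring_inv_mult_twist:
  assumes "u \<in> ring_units"
  shows "ring_inv (u * twist x) = ring_inv u * twist (- x)"
proof (rule ring_inv_unique)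
  have "u * twist x * (ring_inv u * twist (- x)) = (u * ring_inv u) * (twist x * twist (- x))"
    by (simp only: ac_simps)
  then show "u * twist x * (ring_inv u * twist (- x)) = 1"
    using ring_inv_right[OF assms] by (simp add: twist_mult twist_zero)
qed

lemma sum_psi_unit_multiples:
  assumes c: "c \<in> ring_units"
  shows "(\<Sum>r\<in>UNIV. \<psi> (s * (r * c))) = 0"
proof -
  have "is_ideal (range (\<lambda>r. r * s))" "s \<in> range (\<lambda>r. r * s)"
    by (simp_all add: is_ideal_principal) (metis mult_1 rangeI)
  then obtain r0 where r0: "\<psi> (s * r0) \<noteq> 1"
    using \<psi> s_nonzero unfolding primitive_additive_character_def by (force simp: mult.commute)
  have "(\<Sum>r\<in>UNIV. \<psi> (s * (r * c))) = (\<Sum>r\<in>UNIV. \<psi> (s * r))"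
    using ring_inv_right[OF c] ring_inv_left[OF c]
    by (intro sum.reindex_bij_witness[where i="\<lambda>r. r * ring_inv c" and j="\<lambda>r. r * c"])
      (simp_all add: mult.assoc)
  also have "\<dots> = 0" by (rule sum_additive_character_multiples[OF psi_additive r0])
  finally show ?thesis .
qed

definition phase :: "'a \<Rightarrow> 'a \<Rightarrow> complex" where
  "phase c r = \<psi> (s * (r * c))"

definition kloosterman_term :: "'a \<Rightarrow> 'a \<Rightarrow> complex" where
  "kloosterman_term a u = \<tau> u * \<psi> (u + a * ring_inv u)"

text \<open>Since \<open>s\<^sup>2 = 0\<close>, twisting \<open>a\<close> and \<open>u\<close> by \<open>1 + s R\<close> only changes
  \<open>u + a u\<^sup>-\<^sup>1\<close> by \<open>s\<close>-multiples, linearly in the twist parameters.\<close>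
lemma kloosterman_term_twist:
  assumes u: "u \<in> ring_units"
  shows "kloosterman_term (a * twist t) (u * twist x)
    = kloosterman_term a u * phase (u - a * ring_inv u) x * phase (a * ring_inv u) t"
proof -
  have "u * twist x + (a * twist t) * (ring_inv u * twist (- x))
      = u * twist x + (a * ring_inv u) * (twist t * twist (- x))"
    by (simp only: ac_simps)
  also have "\<dots> = (u + a * ring_inv u) + (s * (x * (u - a * ring_inv u)) + s * (t * (a * ring_inv u)))"
    unfolding twist_mult by (simp add: twist_def algebra_simps)
  finally show ?thesis
    using u twist_in_units
    by (simp add: kloosterman_term_def phase_def ring_inv_mult_twist mult_character_mult[OF \<tau>]
        tau_twist additive_character_add[OF psi_additive] mult.assoc)
qed

lemma phase_add: "phase (c + c') r = phase c r * phase c' r"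
  by (simp add: phase_def distrib_left additive_character_add[OF psi_additive])

fun cube_term :: "'a \<times> 'a \<times> 'a \<times> 'a \<Rightarrow> complex" where
  "cube_term (a, u, v, w) = kloosterman_term a u * kloosterman_term a v * kloosterman_term a w"

fun twist_action :: "'a \<times> 'a \<times> 'a \<times> 'a \<Rightarrow> 'a \<times> 'a \<times> 'a \<times> 'a \<Rightarrow> 'a \<times> 'a \<times> 'a \<times> 'a" where
  "twist_action (t, x, y, z) (a, u, v, w) = (a * twist t, u * twist x, v * twist y, w * twist z)"

lemma cube_term_twist:
  assumes "u \<in> ring_units" "v \<in> ring_units" "w \<in> ring_units"
  shows "cube_term (twist_action (t, x, y, z) (a, u, v, w)) = cube_term (a, u, v, w) *
    (phase (a * (ring_inv u + ring_inv v + ring_inv w)) t * phase (u - a * ring_inv u) x *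
     phase (v - a * ring_inv v) y * phase (w - a * ring_inv w) z)"
  using assms by (simp add: kloosterman_term_twist distrib_left phase_add ac_simps)

lemma sum_cube_term_twist_orbit:
  assumes three: "(3::'a) \<in> ring_units"
    and q: "q \<in> ring_units \<times> ring_units \<times> ring_units \<times> ring_units"
  shows "(\<Sum>p\<in>UNIV. cube_term (twist_action p q)) = 0"
proof -
  obtain a u v w where q_eq: "q = (a, u, v, w)" and units: "a \<in> ring_units" "u \<in> ring_units"
    "v \<in> ring_units" "w \<in> ring_units"
    using q by auto
  let ?c = "a * (ring_inv u + ring_inv v + ring_inv w)" and ?cu = "u - a * ring_inv u"
    and ?cv = "v - a * ring_inv v" and ?cw = "w - a * ring_inv w"
  have "(\<Sum>p\<in>UNIV. cube_term (twist_action p q))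
      = cube_term q * (\<Sum>p\<in>UNIV \<times> UNIV \<times> UNIV \<times> UNIV.
          case p of (t, x, y, z) \<Rightarrow> phase ?c t * phase ?cu x * phase ?cv y * phase ?cw z)"
    unfolding sum_distrib_left UNIV_Times_UNIV q_eq
    by (intro sum.cong) (auto simp: cube_term_twist units(2-4) simp del: cube_term.simps twist_action.simps)
  also have "\<dots> = cube_term q * (sum (phase ?c) UNIV * sum (phase ?cu) UNIV * sum (phase ?cv) UNIV *
      sum (phase ?cw) UNIV)"
    by (simp only: sum_product4)
  also have "\<dots> = 0"
    using local_ring_twist_coefficient_unit[OF local three units] sum_psi_unit_multiples
    by (auto simp: phase_def)
  finally show ?thesis .
qed

lemma sum_cube_term_twist_invariant:
  "(\<Sum>q\<in>ring_units \<times> ring_units \<times> ring_units \<times> ring_units. cube_term (twist_action p q))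
    = (\<Sum>q\<in>ring_units \<times> ring_units \<times> ring_units \<times> ring_units. cube_term q)"
proof -
  obtain t x y z where p: "p = (t, x, y, z)" by (cases p)
  have cancel: "b * twist r * twist (- r) = b" "b * twist (- r) * twist r = b" for b r
    by (simp_all add: mult.assoc twist_mult twist_zero)
  show ?thesis unfolding p
    by (rule sum.reindex_bij_witness[where i="twist_action (- t, - x, - y, - z)"
          and j="twist_action (t, x, y, z)"])
      (auto simp: cancel ring_units_mult twist_in_units)
qed

lemma sum_kloosterman_cube:
  "(\<Sum>a\<in>ring_units. (kloosterman \<tau> \<psi> a) ^ 3)
    = (\<Sum>q\<in>ring_units \<times> ring_units \<times> ring_units \<times> ring_units. cube_term q)"
  by (simp add: kloosterman_def kloosterman_term_def[symmetric] power3_sum sum.cartesian_product')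

theorem sum_kloosterman_cube_eq_zero:
  assumes "(3::'a) \<in> ring_units"
  shows "(\<Sum>a\<in>ring_units. (kloosterman \<tau> \<psi> a) ^ 3) = 0"
  unfolding sum_kloosterman_cube
  by (rule sum_zero_by_averaging[of UNIV _ twist_action])
    (simp_all add: sum_cube_term_twist_invariant sum_cube_term_twist_orbit[OF assms])

end

theorem mainTheorem4:
  fixes \<psi> \<tau> :: "'a::{comm_ring_1, finite} \<Rightarrow> complex"
  assumes "local_ring TYPE('a)"
    and "frobenius_ring TYPE('a)"
    and "\<not> is_field_ring TYPE('a)"
    and "odd (residue_char TYPE('a))"
    and "(3::'a) \<in> ring_units"
    and "primitive_additive_character \<psi>"
    and "mult_character \<tau>"
    and "\<not> primitive_mult_character \<tau>"
  shows "(\<Sum>a\<in>ring_units. (kloosterman \<tau> \<psi> a) ^ 3) = 0"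
proof -
  obtain s where "s \<in> char_trivial_ideal \<tau>" "s \<noteq> 0" "\<And>n. n \<notin> ring_units \<Longrightarrow> n * s = 0"
    using local_ring_ideal_socle_element[OF assms(1)] char_trivial_ideal_nonzero[OF assms(1,3,7,8)]
    by metis
  then interpret kloosterman_socle \<psi> \<tau> s
    using assms(1,6,7) by unfold_locales
  show ?thesis by (rule sum_kloosterman_cube_eq_zero[OF assms(5)])
qed

end
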